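(* Let $X$ be a finite-dimensional real Hilbert space, $Y$ a real Hilbert space, and $\mathsf{K_h}: X \to Y$ a linear operator. Let $\{\phi_1,\dots,\phi_n\}$ be an orthonormal basis of $X$ such that $\mathsf{K_h}\phi_i \neq c\,\mathsf{K_h}\phi_j$ for all $i \neq j$ and all $c \in \mathbb{R}$. Define the linear operator $\mathsf{W}: X\to X$ by $\mathsf{W}\phi_i = \|\mathsf{P}\phi_i\|_X\,\phi_i$ for $i=1,\dots,n$, where $\mathsf{P}$ is the orthogonal projection of $X$ onto $\mathcal{N}(\mathsf{K_h})^\perp$. (Then $\|\mathsf{P}\phi_i\|_X > 0$ for all $i$, so $\mathsf{W}$ is invertible.) Fix $j \in \{1,\dots,n\}$ and let $x_j^*$ be the minimum norm least squares solution of $\mathsf{K_h}x = \mathsf{K_h}\phi_j$. Write $\mathsf{W}^{-1}x_j^* = \sum_{i=1}^n c_i \phi_i$. Then $j$ is the unique index maximizing $c_i$, i.e. $c_j > c_i$ for all $i\neq j$.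
   Context: $\mathcal{N}(\mathsf{K_h})$ is the nullspace of $\mathsf{K_h}$ and $\mathcal{N}(\mathsf{K_h})^\perp$ its orthogonal complement in $X$. The minimum norm least squares solution of $\mathsf{K_h}x=b$ is the element of smallest norm among the minimizers of $\|\mathsf{K_h}x-b\|_Y$, i.e. $\mathsf{K_h}^\dagger b$ with $\mathsf{K_h}^\dagger$ the Moore–Penrose inverse. *)

theory Defs
  imports "HOL-Analysis.Analysis"
begin

definition nullspace :: "('a::real_vector \<Rightarrow> 'b::real_vector) \<Rightarrow> 'a set" where
  "nullspace K = {x. K x = 0}"

definition orth_proj :: "'a::real_inner set \<Rightarrow> 'a \<Rightarrow> 'a" where
  "orth_proj S x = (THE p. p \<in> S \<and> x - p \<in> orthogonal_comp S)"

definition ls_solution :: "('a::real_normed_vector \<Rightarrow> 'b::real_normed_vector) \<Rightarrow> 'b \<Rightarrow> 'a \<Rightarrow> bool" where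
  "ls_solution K b x \<longleftrightarrow> (\<forall>y. norm (K x - b) \<le> norm (K y - b))"

definition mnls_solution :: "('a::real_normed_vector \<Rightarrow> 'b::real_normed_vector) \<Rightarrow> 'b \<Rightarrow> 'a" where
  "mnls_solution K b =
     (THE x. ls_solution K b x \<and> (\<forall>y. ls_solution K b y \<longrightarrow> norm x \<le> norm y))"

definition weight_op :: "('a::real_inner \<Rightarrow> 'b::real_inner) \<Rightarrow> (nat \<Rightarrow> 'a) \<Rightarrow> nat \<Rightarrow> 'a \<Rightarrow> 'a" where
  "weight_op K \<phi> n x =
     (\<Sum>i\<in>{1..n}. (norm (orth_proj (orthogonal_comp (nullspace K)) (\<phi> i)) * (x \<bullet> \<phi> i)) *\<^sub>R \<phi> i)"

end

theory Submission
  imports Defs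
begin

text \<open>Write P for the orthogonal projection onto \<open>N(K)\<^sup>\<bottom>\<close>. The minimum norm least squares
  solution of \<open>K x = K \<phi>\<^sub>j\<close> is \<open>p = P \<phi>\<^sub>j\<close>, and since \<open>p \<in> N(K)\<^sup>\<bottom>\<close> we have
  \<open>p \<bullet> \<phi>\<^sub>k = p \<bullet> P \<phi>\<^sub>k\<close>. As W is diagonal in the basis, the coefficients of \<open>W\<^sup>-\<^sup>1 p\<close> are
  \<open>c\<^sub>k = p \<bullet> P \<phi>\<^sub>k / \<parallel>P \<phi>\<^sub>k\<parallel>\<close>. Hence \<open>c\<^sub>j = \<parallel>p\<parallel>\<close>, while for \<open>i \<noteq> j\<close> Cauchy--Schwarz gives
  \<open>c\<^sub>i \<le> \<parallel>p\<parallel>\<close>, with equality only if \<open>P \<phi>\<^sub>i\<close> is a multiple of p; applying K, this would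
  make \<open>K \<phi>\<^sub>i\<close> a multiple of \<open>K \<phi>\<^sub>j\<close>.\<close>

lemma subspace_nullspace: "linear K \<Longrightarrow> subspace (nullspace K)"
  unfolding nullspace_def by (rule linear_subspace_kernel)

lemma orthogonal_comp_inner_zero: "p \<in> orthogonal_comp S \<Longrightarrow> v \<in> S \<Longrightarrow> p \<bullet> v = 0"
  by (subst inner_commute) (auto simp: orthogonal_comp_def orthogonal_def)

lemma orth_proj_eqI:
  assumes "subspace T" and "z \<in> T" and "x - z \<in> orthogonal_comp T"
  shows "orth_proj T x = z"
  unfolding orth_proj_def
proof (rule the_equality)
  show "z \<in> T \<and> x - z \<in> orthogonal_comp T" using assms(2,3) ..
next
  fix p assume p: "p \<in> T \<and> x - p \<in> orthogonal_comp T"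
  have "(x - p) - (x - z) \<in> orthogonal_comp T"
    by (rule subspace_diff[OF subspace_orthogonal_comp]) (use p assms(3) in auto)
  then have "z - p \<in> orthogonal_comp T" by simp
  moreover have "z - p \<in> T" using p assms(1,2) subspace_diff by blast
  ultimately have "z - p \<in> T \<inter> orthogonal_comp T" by blast
  then show "p = z" using orthogonal_Int_0[OF assms(1)] by simp
qed

lemma orth_proj_orthogonal_comp:
  fixes S :: "'a::euclidean_space set"
  assumes "subspace S"
  shows "orth_proj (orthogonal_comp S) x \<in> orthogonal_comp S"
    and "x - orth_proj (orthogonal_comp S) x \<in> S"
proof -
  have "x \<in> S + orthogonal_comp S" using subspace_sum_orthogonal_comp[OF assms] by simp
  then obtain s t where x: "x = s + t" and s: "s \<in> S" and t: "t \<in> orthogonal_comp S"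
    by (rule set_plus_elim)
  have "orth_proj (orthogonal_comp S) x = t"
    using orth_proj_eqI[OF subspace_orthogonal_comp t] s x orthogonal_comp_self[OF assms] by simp
  then show "orth_proj (orthogonal_comp S) x \<in> orthogonal_comp S"
    and "x - orth_proj (orthogonal_comp S) x \<in> S"
    using s t x by simp_all
qed

lemma linear_orth_proj_nullspace:
  fixes K :: "'a::euclidean_space \<Rightarrow> 'b::real_vector"
  assumes "linear K"
  shows "K (orth_proj (orthogonal_comp (nullspace K)) x) = K x"
  using orth_proj_orthogonal_comp(2)[OF subspace_nullspace[OF assms], of x]
  by (simp add: nullspace_def linear_diff[OF assms])

lemma orth_proj_nullspace_eq_0_iff:
  fixes K :: "'a::euclidean_space \<Rightarrow> 'b::real_vector"
  assumes lin: "linear K"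
  shows "orth_proj (orthogonal_comp (nullspace K)) x = 0 \<longleftrightarrow> K x = 0"
proof
  assume "orth_proj (orthogonal_comp (nullspace K)) x = 0"
  then show "K x = 0" using linear_orth_proj_nullspace[OF lin, of x] by (simp add: linear_0[OF lin])
next
  assume "K x = 0"
  then have "orth_proj (orthogonal_comp (nullspace K)) x \<in> nullspace K"
    using linear_orth_proj_nullspace[OF lin, of x] by (simp add: nullspace_def)
  with orth_proj_orthogonal_comp(1)[OF subspace_nullspace[OF lin]]
  show "orth_proj (orthogonal_comp (nullspace K)) x = 0"
    using orthogonal_Int_0[OF subspace_nullspace[OF lin]] by blast
qed

lemma inner_orth_proj_nullspace:
  fixes K :: "'a::euclidean_space \<Rightarrow> 'b::real_vector"
  assumes "linear K" and "p \<in> orthogonal_comp (nullspace K)"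
  shows "p \<bullet> orth_proj (orthogonal_comp (nullspace K)) x = p \<bullet> x"
proof -
  have "x - orth_proj (orthogonal_comp (nullspace K)) x \<in> nullspace K"
    using orth_proj_orthogonal_comp(2)[OF subspace_nullspace[OF assms(1)]] .
  then have "p \<bullet> (x - orth_proj (orthogonal_comp (nullspace K)) x) = 0"
    by (rule orthogonal_comp_inner_zero[OF assms(2)])
  then show ?thesis by (simp add: inner_diff_right)
qed

lemma ls_solution_consistent_iff:
  "ls_solution K (K x) y \<longleftrightarrow> K y = K x"
  unfolding ls_solution_def
proof
  assume "\<forall>y'. norm (K y - K x) \<le> norm (K y' - K x)"
  then have "norm (K y - K x) \<le> norm (K x - K x)" by blast
  then show "K y = K x" by simp
qed simp

lemma mnls_solution_eq_orth_proj:
  fixes K :: "'a::euclidean_space \<Rightarrow> 'b::real_normed_vector"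
  assumes lin: "linear K"
  shows "mnls_solution K (K x) = orth_proj (orthogonal_comp (nullspace K)) x"
proof -
  let ?p = "orth_proj (orthogonal_comp (nullspace K)) x"
  have pythagoras: "(norm y)\<^sup>2 = (norm ?p)\<^sup>2 + (norm (y - ?p))\<^sup>2" if "K y = K x" for y
  proof -
    have "y - ?p \<in> nullspace K"
      using that linear_orth_proj_nullspace[OF lin, of x] by (simp add: nullspace_def linear_diff[OF lin])
    with orth_proj_orthogonal_comp(1)[OF subspace_nullspace[OF lin]]
    have "orthogonal ?p (y - ?p)"
      unfolding orthogonal_def by (rule orthogonal_comp_inner_zero)
    from norm_add_Pythagorean[OF this] show ?thesis by simp
  qed
  have ls_p: "ls_solution K (K x) ?p"
    by (simp add: ls_solution_consistent_iff linear_orth_proj_nullspace[OF lin])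
  show ?thesis
    unfolding mnls_solution_def
  proof (rule the_equality)
    show "ls_solution K (K x) ?p \<and> (\<forall>y. ls_solution K (K x) y \<longrightarrow> norm ?p \<le> norm y)"
    proof (intro conjI allI impI ls_p)
      fix y assume "ls_solution K (K x) y"
      then have "(norm ?p)\<^sup>2 \<le> (norm y)\<^sup>2" using pythagoras by (simp add: ls_solution_consistent_iff)
      then show "norm ?p \<le> norm y" by (simp add: power_mono_iff)
    qed
  next
    fix y assume y: "ls_solution K (K x) y \<and> (\<forall>y'. ls_solution K (K x) y' \<longrightarrow> norm y \<le> norm y')"
    then have "(norm y)\<^sup>2 \<le> (norm ?p)\<^sup>2" using ls_p by (simp add: power_mono)
    with y pythagoras have "norm (y - ?p) = 0" by (simp add: ls_solution_consistent_iff)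
    then show "y = ?p" by simp
  qed
qed

lemma inner_sum_orthonormal:
  fixes \<phi> :: "nat \<Rightarrow> 'a::real_inner"
  assumes "\<forall>i\<in>{1..n}. \<forall>k\<in>{1..n}. \<phi> i \<bullet> \<phi> k = (if i = k then 1 else 0)" and "k \<in> {1..n}"
  shows "(\<Sum>i\<in>{1..n}. a i *\<^sub>R \<phi> i) \<bullet> \<phi> k = a k"
proof -
  have "(\<Sum>i\<in>{1..n}. a i *\<^sub>R \<phi> i) \<bullet> \<phi> k = (\<Sum>i\<in>{1..n}. if i = k then a i else 0)"
    unfolding inner_sum_left using assms by (intro sum.cong) auto
  also have "\<dots> = a k" using assms(2) by simp
  finally show ?thesis .
qed

lemma orthonormal_basis_expansion:
  fixes \<phi> :: "nat \<Rightarrow> 'a::real_inner"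
  assumes orthonormal: "\<forall>i\<in>{1..n}. \<forall>k\<in>{1..n}. \<phi> i \<bullet> \<phi> k = (if i = k then 1 else 0)"
    and basis: "span (\<phi> ` {1..n}) = UNIV"
  shows "x = (\<Sum>i\<in>{1..n}. (x \<bullet> \<phi> i) *\<^sub>R \<phi> i)"
proof -
  let ?d = "x - (\<Sum>i\<in>{1..n}. (x \<bullet> \<phi> i) *\<^sub>R \<phi> i)"
  have "orthogonal ?d y" if "y \<in> \<phi> ` {1..n}" for y
    using that inner_sum_orthonormal[OF orthonormal] by (auto simp: orthogonal_def inner_diff_left)
  then have "orthogonal ?d ?d"
    by (rule orthogonal_to_span[rotated]) (use basis in auto)
  then show ?thesis by (metis orthogonal_self right_minus_eq)
qed

lemma inv_diagonal_operator:
  fixes \<phi> :: "nat \<Rightarrow> 'a::real_inner"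
  assumes orthonormal: "\<forall>i\<in>{1..n}. \<forall>k\<in>{1..n}. \<phi> i \<bullet> \<phi> k = (if i = k then 1 else 0)"
    and basis: "span (\<phi> ` {1..n}) = UNIV"
    and nonzero: "\<forall>k\<in>{1..n}. d k \<noteq> 0"
  shows "inv (\<lambda>x. \<Sum>k\<in>{1..n}. (d k * (x \<bullet> \<phi> k)) *\<^sub>R \<phi> k) y
       = (\<Sum>k\<in>{1..n}. ((y \<bullet> \<phi> k) / d k) *\<^sub>R \<phi> k)"
proof (rule inv_f_eq)
  let ?D = "\<lambda>x. \<Sum>k\<in>{1..n}. (d k * (x \<bullet> \<phi> k)) *\<^sub>R \<phi> k"
  have coeff: "?D x \<bullet> \<phi> k = d k * (x \<bullet> \<phi> k)" if "k \<in> {1..n}" for x k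
    using inner_sum_orthonormal[OF orthonormal that] .
  show "inj ?D"
  proof (rule injI)
    fix x x' assume "?D x = ?D x'"
    then have "x \<bullet> \<phi> k = x' \<bullet> \<phi> k" if "k \<in> {1..n}" for k
      using coeff[OF that, of x] coeff[OF that, of x'] nonzero that by simp
    then have "(\<Sum>k\<in>{1..n}. (x \<bullet> \<phi> k) *\<^sub>R \<phi> k) = (\<Sum>k\<in>{1..n}. (x' \<bullet> \<phi> k) *\<^sub>R \<phi> k)"
      by (intro sum.cong) auto
    then show "x = x'"
      by (metis orthonormal_basis_expansion[OF orthonormal basis])
  qed
  have "?D (\<Sum>k\<in>{1..n}. ((y \<bullet> \<phi> k) / d k) *\<^sub>R \<phi> k) = (\<Sum>k\<in>{1..n}. (y \<bullet> \<phi> k) *\<^sub>R \<phi> k)"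
    using inner_sum_orthonormal[OF orthonormal] nonzero by (intro sum.cong) auto
  also have "\<dots> = y"
    by (rule orthonormal_basis_expansion[OF orthonormal basis, symmetric])
  finally show "?D (\<Sum>k\<in>{1..n}. ((y \<bullet> \<phi> k) / d k) *\<^sub>R \<phi> k) = y" .
qed

lemma inv_weight_op:
  fixes K :: "'a::euclidean_space \<Rightarrow> 'b::real_inner" and \<phi> :: "nat \<Rightarrow> 'a"
  assumes lin: "linear K"
    and orthonormal: "\<forall>i\<in>{1..n}. \<forall>k\<in>{1..n}. \<phi> i \<bullet> \<phi> k = (if i = k then 1 else 0)"
    and basis: "span (\<phi> ` {1..n}) = UNIV"
    and nonzero: "\<forall>k\<in>{1..n}. K (\<phi> k) \<noteq> 0"
  shows "inv (weight_op K \<phi> n) y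
       = (\<Sum>k\<in>{1..n}. (y \<bullet> \<phi> k / norm (orth_proj (orthogonal_comp (nullspace K)) (\<phi> k))) *\<^sub>R \<phi> k)"
proof -
  have weight: "weight_op K \<phi> n
      = (\<lambda>x. \<Sum>k\<in>{1..n}. (norm (orth_proj (orthogonal_comp (nullspace K)) (\<phi> k)) * (x \<bullet> \<phi> k)) *\<^sub>R \<phi> k)"
    by (simp add: weight_op_def fun_eq_iff)
  have "\<forall>k\<in>{1..n}. norm (orth_proj (orthogonal_comp (nullspace K)) (\<phi> k)) \<noteq> 0"
    using nonzero orth_proj_nullspace_eq_0_iff[OF lin] by simp
  then show ?thesis unfolding weight by (rule inv_diagonal_operator[OF orthonormal basis])
qed

lemma nonparallel_imp_nonzero:
  fixes f :: "'i \<Rightarrow> 'a::real_vector"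
  assumes "\<forall>i\<in>I. \<forall>k\<in>I. i \<noteq> k \<longrightarrow> (\<forall>a::real. f i \<noteq> a *\<^sub>R f k)"
    and "i \<in> I" and "j \<in> I" and "i \<noteq> j"
  shows "\<forall>k\<in>I. f k \<noteq> 0"
proof
  fix k assume k: "k \<in> I"
  obtain m where m: "m \<in> I" "k \<noteq> m" using assms(2-4) by metis
  show "f k \<noteq> 0" using assms(1)[rule_format, OF k m, of 0] by simp
qed

lemma inner_div_norm_less_norm:
  fixes u v :: "'a::real_inner"
  assumes "u \<noteq> 0" and "\<forall>a. v \<noteq> a *\<^sub>R u"
  shows "u \<bullet> v / norm v < norm u"
proof -
  have "v \<noteq> 0" using assms(2)[rule_format, of 0] by simp
  have "u \<bullet> v \<noteq> norm u * norm v"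
  proof
    assume "u \<bullet> v = norm u * norm v"
    then have "norm u *\<^sub>R v = norm v *\<^sub>R u" by (simp add: norm_cauchy_schwarz_eq)
    then have "(1 / norm u) *\<^sub>R (norm u *\<^sub>R v) = (1 / norm u) *\<^sub>R (norm v *\<^sub>R u)" by simp
    then have "v = (1 / norm u) *\<^sub>R (norm v *\<^sub>R u)" using assms(1) by simp
    then show False using assms(2)[rule_format, of "norm v / norm u"] by simp
  qed
  then have "u \<bullet> v < norm u * norm v" using norm_cauchy_schwarz[of u v] by simp
  then show ?thesis using \<open>v \<noteq> 0\<close> by (simp add: divide_less_eq)
qed

theorem theorem1:
  fixes K :: "'a::euclidean_space \<Rightarrow> 'b::{real_inner, complete_space}"
    and \<phi> :: "nat \<Rightarrow> 'a" and n :: nat and j :: nat and c :: "nat \<Rightarrow> real"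
  assumes lin: "linear K"
    and orthonormal: "\<forall>i\<in>{1..n}. \<forall>k\<in>{1..n}. \<phi> i \<bullet> \<phi> k = (if i = k then 1 else 0)"
    and basis: "span (\<phi> ` {1..n}) = UNIV"
    and distinct_dirs: "\<forall>i\<in>{1..n}. \<forall>k\<in>{1..n}. i \<noteq> k \<longrightarrow> (\<forall>a::real. K (\<phi> i) \<noteq> a *\<^sub>R K (\<phi> k))"
    and j: "j \<in> {1..n}"
    and coeffs: "inv (weight_op K \<phi> n) (mnls_solution K (K (\<phi> j))) = (\<Sum>i\<in>{1..n}. c i *\<^sub>R \<phi> i)"
  shows "\<forall>i\<in>{1..n}. i \<noteq> j \<longrightarrow> c j > c i"
proof (intro ballI impI)
  fix i assume i: "i \<in> {1..n}" and "i \<noteq> j"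
  let ?P = "orth_proj (orthogonal_comp (nullspace K))"
  define p where "p = ?P (\<phi> j)"
  have K_nonzero: "\<forall>k\<in>{1..n}. K (\<phi> k) \<noteq> 0"
    using nonparallel_imp_nonzero[OF distinct_dirs i j \<open>i \<noteq> j\<close>] .
  have p_nonzero: "p \<noteq> 0"
    using K_nonzero j orth_proj_nullspace_eq_0_iff[OF lin] by (simp add: p_def)
  have "(\<Sum>k\<in>{1..n}. c k *\<^sub>R \<phi> k) = (\<Sum>k\<in>{1..n}. (p \<bullet> \<phi> k / norm (?P (\<phi> k))) *\<^sub>R \<phi> k)"
    using coeffs
    by (simp add: inv_weight_op[OF lin orthonormal basis K_nonzero] mnls_solution_eq_orth_proj[OF lin] p_def)
  then have c: "c k = p \<bullet> ?P (\<phi> k) / norm (?P (\<phi> k))" if "k \<in> {1..n}" for k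
    using inner_sum_orthonormal[OF orthonormal that, of c]
      inner_sum_orthonormal[OF orthonormal that, of "\<lambda>k. p \<bullet> \<phi> k / norm (?P (\<phi> k))"]
      inner_orth_proj_nullspace[OF lin orth_proj_orthogonal_comp(1)[OF subspace_nullspace[OF lin]], of _ "\<phi> k"]
    by (simp add: p_def)
  have "c j = norm p"
    using c[OF j] p_nonzero by (simp add: p_def dot_square_norm power2_eq_square)
  moreover have "\<forall>a. ?P (\<phi> i) \<noteq> a *\<^sub>R p"
  proof (intro allI notI)
    fix a assume "?P (\<phi> i) = a *\<^sub>R p"
    then have "K (\<phi> i) = a *\<^sub>R K (\<phi> j)"
      by (metis p_def linear_scale[OF lin] linear_orth_proj_nullspace[OF lin])
    then show False using distinct_dirs i j \<open>i \<noteq> j\<close> by blast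
  qed
  then have "c i < norm p"
    using c[OF i] inner_div_norm_less_norm p_nonzero by simp
  ultimately show "c j > c i" by simp
qed

end
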